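(* Let $G$ be a graph and $x_0$ a vertex of degree two in $G$ with two distinct neighbors $x_1,x_2$, and let $J'=G/x_0$. If $J'$ has an osculating bicycle $(Q,Q')$ such that neither $Q$ nor $Q'$ is a cycle of $G$, then (the edges of) $Q\cup Q'$ form an $x_0$-isolating even cycle of $G$.
   Context: Graphs are loopless; multiple edges allowed (a pair of parallel edges forms a cycle of length two). $G/x_0$ (bicontraction of $x_0$) is the graph obtained from $G$ by contracting the two edges $x_0x_1$ and $x_0x_2$ into a single vertex; every other edge of $G$ is identified with the corresponding edge of $G/x_0$ (parallel edges may arise). An osculating bicycle is a pair of cycles $(Q,Q')$ that have exactly one vertex in common and whose lengths have the same parity. For a vertex $v$ of $G$, a cycle $C$ of $G-v$ is $v$-isolating if $v$ is an isolated vertex of $G-V(C)$. *)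

theory Defs
  imports Main
begin

text \<open>A (finite, loopless) multigraph is a triple (V, E, ends): a vertex set, an edge set,
  and an incidence map assigning to each edge its set of two distinct end vertices.
  Parallel edges are allowed since distinct edges may have the same ends.\<close>

type_synonym ('v,'e) mgraph = "'v set \<times> 'e set \<times> ('e \<Rightarrow> 'v set)"

definition gV :: "('v,'e) mgraph \<Rightarrow> 'v set" where "gV G = fst G"
definition gE :: "('v,'e) mgraph \<Rightarrow> 'e set" where "gE G = fst (snd G)"
definition gends :: "('v,'e) mgraph \<Rightarrow> 'e \<Rightarrow> 'v set" where "gends G = snd (snd G)"

definition wf_mgraph :: "('v,'e) mgraph \<Rightarrow> bool" where
  "wf_mgraph G \<longleftrightarrow> finite (gV G) \<and> finite (gE G) \<and>
     (\<forall>e\<in>gE G. gends G e \<subseteq> gV G \<and> card (gends G e) = 2)"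

definition incident :: "('v,'e) mgraph \<Rightarrow> 'v \<Rightarrow> 'e set" where
  "incident G v = {e \<in> gE G. v \<in> gends G e}"

definition degree :: "('v,'e) mgraph \<Rightarrow> 'v \<Rightarrow> nat" where
  "degree G v = card (incident G v)"

definition neighbors :: "('v,'e) mgraph \<Rightarrow> 'v \<Rightarrow> 'v set" where
  "neighbors G v = (\<Union>e\<in>incident G v. gends G e) - {v}"

definition everts :: "('v,'e) mgraph \<Rightarrow> 'e set \<Rightarrow> 'v set" where
  "everts G C = (\<Union>e\<in>C. gends G e)"

text \<open>A cycle is represented by its (nonempty, finite) edge set: a connected edge set in
  which every spanned vertex has degree exactly two. Its length is the number of edges;
  two parallel edges form a cycle of length two.\<close>
definition is_cycle :: "('v,'e) mgraph \<Rightarrow> 'e set \<Rightarrow> bool" where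
  "is_cycle G C \<longleftrightarrow> C \<subseteq> gE G \<and> C \<noteq> {} \<and> finite C \<and>
     (\<forall>e\<in>C. card (gends G e) = 2) \<and>
     (\<forall>v\<in>everts G C. card {e\<in>C. v \<in> gends G e} = 2) \<and>
     (\<forall>D. D \<noteq> {} \<and> D \<subset> C \<longrightarrow>
        (\<exists>e\<in>D. \<exists>e'\<in>C - D. gends G e \<inter> gends G e' \<noteq> {}))"

definition osculating_bicycle :: "('v,'e) mgraph \<Rightarrow> 'e set \<Rightarrow> 'e set \<Rightarrow> bool" where
  "osculating_bicycle G Q Q' \<longleftrightarrow> is_cycle G Q \<and> is_cycle G Q' \<and>
     card (everts G Q \<inter> everts G Q') = 1 \<and> (even (card Q) \<longleftrightarrow> even (card Q'))"

definition delete_vertex :: "('v,'e) mgraph \<Rightarrow> 'v \<Rightarrow> ('v,'e) mgraph" where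
  "delete_vertex G v = (gV G - {v}, {e \<in> gE G. v \<notin> gends G e}, gends G)"

text \<open>A cycle C of G - v is v-isolating if v is isolated in G - V(C), i.e. every edge of G
  at v has an end in V(C).\<close>
definition isolating_cycle :: "('v,'e) mgraph \<Rightarrow> 'v \<Rightarrow> 'e set \<Rightarrow> bool" where
  "isolating_cycle G v C \<longleftrightarrow> v \<in> gV G \<and> is_cycle (delete_vertex G v) C \<and>
     (\<forall>e\<in>incident G v. gends G e \<inter> everts G C \<noteq> {})"

text \<open>Bicontraction G/x0 where x1, x2 are the two neighbours of x0: the edges x0x1, x0x2 are
  contracted; the resulting vertex is represented by x1 (x0 and x2 are merged into x1).
  Every other edge keeps its identity; edges that would become loops (edges x1x2) are
  discarded, since graphs are loopless.\<close>
definition merge_map :: "'v \<Rightarrow> 'v \<Rightarrow> 'v \<Rightarrow> 'v" where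
  "merge_map x1 x2 v = (if v = x2 then x1 else v)"

definition bicontract :: "('v,'e) mgraph \<Rightarrow> 'v \<Rightarrow> 'v \<Rightarrow> 'v \<Rightarrow> ('v,'e) mgraph" where
  "bicontract G x0 x1 x2 =
    (gV G - {x0, x2},
     {e \<in> gE G. x0 \<notin> gends G e \<and> card (merge_map x1 x2 ` gends G e) = 2},
     (\<lambda>e. merge_map x1 x2 ` gends G e))"

end

(*
  A cycle Q of G/x0 that is not a cycle of G must use both x1 and x2 in G: otherwise the merge
  map is injective on the vertices of Q and Q is already a cycle of G. Counting degrees in the
  merged vertex shows that Q has exactly one edge at x1 and one at x2, and a handshake parity
  argument shows that Q stays connected in G, so Q is an x1-x2 path of G - x0. Two such paths that
  meet in G/x0 only in the merged vertex are edge-disjoint and meet in G only in x1 and x2, so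
  their union is a cycle of G - x0 through both neighbours of x0, hence x0-isolating; its length
  is even because the lengths of Q and Q' have the same parity.
*)
theory Submission
  imports Defs
begin

abbreviation edges_at :: "('v,'e) mgraph \<Rightarrow> 'e set \<Rightarrow> 'v \<Rightarrow> 'e set" where
  "edges_at G C v \<equiv> {e \<in> C. v \<in> gends G e}"

lemma gE_delete_vertex [simp]: "gE (delete_vertex G v) = {e \<in> gE G. v \<notin> gends G e}"
  and gends_delete_vertex [simp]: "gends (delete_vertex G v) = gends G"
  by (simp_all add: delete_vertex_def gE_def gends_def)

lemma gE_bicontract [simp]:
    "gE (bicontract G x0 x1 x2) = {e \<in> gE G. x0 \<notin> gends G e \<and> card (merge_map x1 x2 ` gends G e) = 2}"
  and gends_bicontract [simp]: "gends (bicontract G x0 x1 x2) e = merge_map x1 x2 ` gends G e"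
  by (simp_all add: bicontract_def gE_def gends_def)

lemma everts_delete_vertex [simp]: "everts (delete_vertex G v) C = everts G C"
  by (simp add: everts_def)

lemma everts_bicontract: "everts (bicontract G x0 x1 x2) C = merge_map x1 x2 ` everts G C"
  by (simp add: everts_def image_UN)

lemma edges_at_eq_empty_iff: "edges_at G C v = {} \<longleftrightarrow> v \<notin> everts G C"
  by (auto simp: everts_def)

lemma inj_on_merge_map: "x1 \<notin> A \<or> x2 \<notin> A \<Longrightarrow> inj_on (merge_map x1 x2) A"
  by (auto simp: inj_on_def merge_map_def)

lemma merge_map_eq_iff:
  "merge_map x1 x2 u = merge_map x1 x2 u' \<longleftrightarrow> u = u' \<or> {u, u'} = {x1, x2}"
  by (auto simp: merge_map_def doubleton_eq_iff)

lemma merged_mem_merge_map_image: "x1 \<in> merge_map x1 x2 ` S \<longleftrightarrow> x1 \<in> S \<or> x2 \<in> S"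
  by (force simp: merge_map_def image_iff)

lemma unmerged_mem_merge_map_image:
  "v \<notin> {x1, x2} \<Longrightarrow> v \<in> merge_map x1 x2 ` S \<longleftrightarrow> v \<in> S"
  by (force simp: merge_map_def image_iff)

lemma edges_at_bicontract_merged:
  "edges_at (bicontract G x0 x1 x2) C x1 = edges_at G C x1 \<union> edges_at G C x2"
  by (auto simp: merged_mem_merge_map_image)

lemma edges_at_bicontract_unmerged:
  "v \<notin> {x1, x2} \<Longrightarrow> edges_at (bicontract G x0 x1 x2) C v = edges_at G C v"
  by (simp add: unmerged_mem_merge_map_image)

definition separated :: "('v,'e) mgraph \<Rightarrow> 'e set \<Rightarrow> 'e set \<Rightarrow> bool" where
  "separated G S T \<longleftrightarrow> (\<forall>e\<in>S. \<forall>e'\<in>T. gends G e \<inter> gends G e' = {})"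

definition edge_connected :: "('v,'e) mgraph \<Rightarrow> 'e set \<Rightarrow> bool" where
  "edge_connected G C \<longleftrightarrow> (\<forall>S \<subseteq> C. S \<noteq> {} \<longrightarrow> separated G S (C - S) \<longrightarrow> S = C)"

lemma is_cycle_iff:
  "is_cycle G C \<longleftrightarrow> C \<subseteq> gE G \<and> C \<noteq> {} \<and> finite C \<and> (\<forall>e\<in>C. card (gends G e) = 2) \<and>
     (\<forall>v\<in>everts G C. card (edges_at G C v) = 2) \<and> edge_connected G C"
proof -
  have "edge_connected G C \<longleftrightarrow>
      (\<forall>D. D \<noteq> {} \<and> D \<subset> C \<longrightarrow> (\<exists>e\<in>D. \<exists>e'\<in>C - D. gends G e \<inter> gends G e' \<noteq> {}))"
    unfolding edge_connected_def separated_def psubset_eq by (meson Diff_iff subset_antisym)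
  then show ?thesis unfolding is_cycle_def by simp
qed

lemma edge_connectedD:
  "edge_connected G C \<Longrightarrow> S \<subseteq> C \<Longrightarrow> S \<noteq> {} \<Longrightarrow> separated G S (C - S) \<Longrightarrow> S = C"
  unfolding edge_connected_def by blast

lemma edge_connectedI:
  assumes "a \<in> C" and "\<And>S. S \<subseteq> C \<Longrightarrow> a \<in> S \<Longrightarrow> separated G S (C - S) \<Longrightarrow> S = C"
  shows "edge_connected G C"
  unfolding edge_connected_def
proof (intro allI impI)
  fix S assume S: "S \<subseteq> C" "S \<noteq> {}" "separated G S (C - S)"
  show "S = C"
  proof (cases "a \<in> S")
    case False
    have "separated G (C - S) (C - (C - S))"
      using S unfolding separated_def by (metis Diff_Diff_Int Int_absorb1 inf_commute)
    then have "C - S = C" using assms False by blast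
    with S show ?thesis by blast
  qed (use assms S in blast)
qed

lemma edge_connected_delete_vertex [simp]:
  "edge_connected (delete_vertex G v) C \<longleftrightarrow> edge_connected G C"
  by (simp add: edge_connected_def separated_def)

lemma edges_at_separated:
  assumes "S \<subseteq> C" "separated G S (C - S)" "v \<in> everts G S"
  shows "edges_at G S v = edges_at G C v"
  using assms unfolding separated_def everts_def by blast

lemma separated_bicontract:
  assumes "separated G S T" "edges_at G T x1 = {}" "edges_at G T x2 = {}"
  shows "separated (bicontract G x0 x1 x2) S T"
  unfolding separated_def
proof (intro ballI)
  fix e e' assume e: "e \<in> S" and e': "e' \<in> T"
  show "gends (bicontract G x0 x1 x2) e \<inter> gends (bicontract G x0 x1 x2) e' = {}"
  proof (rule ccontr)
    assume "\<not> ?thesis"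
    then obtain u u' where u: "u \<in> gends G e" "u' \<in> gends G e'"
      and "merge_map x1 x2 u = merge_map x1 x2 u'" by auto
    moreover have "u \<noteq> u'" using assms(1) e e' u unfolding separated_def by blast
    ultimately have "u' \<in> {x1, x2}" by (auto simp: merge_map_eq_iff doubleton_eq_iff)
    then show False using assms(2,3) e' u(2) by blast
  qed
qed

lemma sum_degrees:
  assumes "finite C" "\<forall>e\<in>C. finite (gends G e)"
  shows "(\<Sum>v\<in>everts G C. card (edges_at G C v)) = (\<Sum>e\<in>C. card (gends G e))"
proof -
  have fin: "finite (everts G C)" using assms unfolding everts_def by auto
  have "(\<Sum>v\<in>everts G C. card (edges_at G C v))
      = (\<Sum>v\<in>everts G C. \<Sum>e\<in>C. if v \<in> gends G e then 1 else 0)"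
    using assms(1) by (simp add: sum.If_cases Int_def)
  also have "\<dots> = (\<Sum>e\<in>C. \<Sum>v\<in>everts G C. if v \<in> gends G e then 1 else 0)"
    by (rule sum.swap)
  also have "\<dots> = (\<Sum>e\<in>C. card (gends G e))"
  proof (rule sum.cong)
    fix e assume "e \<in> C"
    then have "everts G C \<inter> gends G e = gends G e" unfolding everts_def by auto
    then show "(\<Sum>v\<in>everts G C. if v \<in> gends G e then 1 else 0) = card (gends G e)"
      using fin by (simp add: sum.If_cases)
  qed simp
  finally show ?thesis .
qed

lemma even_degree_if_others_even:
  assumes "finite C" "\<forall>e\<in>C. card (gends G e) = 2"
    and "\<forall>v\<in>everts G C - {x}. even (card (edges_at G C v))"
  shows "even (card (edges_at G C x))"
proof (cases "x \<in> everts G C")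
  case True
  have fin_ends: "\<forall>e\<in>C. finite (gends G e)"
    using assms(2) by (metis card.infinite zero_neq_numeral)
  then have fin: "finite (everts G C)" using assms(1) unfolding everts_def by blast
  have "card (edges_at G C x) + (\<Sum>v\<in>everts G C - {x}. card (edges_at G C v))
      = (\<Sum>v\<in>everts G C. card (edges_at G C v))"
    using fin True by (rule sum.remove[symmetric])
  also have "\<dots> = 2 * card C"
    using sum_degrees[OF assms(1) fin_ends] assms(2) by simp
  finally have "even (card (edges_at G C x) + (\<Sum>v\<in>everts G C - {x}. card (edges_at G C v)))"
    by simp
  moreover have "even (\<Sum>v\<in>everts G C - {x}. card (edges_at G C v))"
    using assms(3) by (blast intro: dvd_sum)
  ultimately show ?thesis by simp
next
  case False
  then have "edges_at G C x = {}" by (metis edges_at_eq_empty_iff)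
  then show ?thesis by (metis card.empty dvd_0_right)
qed

lemma is_cycle_transfer:
  assumes "is_cycle H C" "C \<subseteq> gE G" "inj_on \<sigma> (everts G C)"
    and ends: "\<And>e. e \<in> C \<Longrightarrow> gends H e = \<sigma> ` gends G e"
  shows "is_cycle G C"
  unfolding is_cycle_iff
proof (intro conjI ballI)
  show "C \<subseteq> gE G" "C \<noteq> {}" "finite C" using assms(1,2) unfolding is_cycle_iff by auto
next
  fix e assume e: "e \<in> C"
  have "inj_on \<sigma> (gends G e)"
    by (rule inj_on_subset[OF assms(3)]) (use e in \<open>auto simp: everts_def\<close>)
  then show "card (gends G e) = 2"
    using assms(1) e ends[OF e] unfolding is_cycle_iff by (metis card_image)
next
  fix v assume v: "v \<in> everts G C"
  have "\<sigma> v \<in> gends H e \<longleftrightarrow> v \<in> gends G e" if "e \<in> C" for e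
  proof -
    have "gends G e \<subseteq> everts G C" using that unfolding everts_def by blast
    then show ?thesis using inj_on_image_mem_iff[OF assms(3) v] ends[OF that] by simp
  qed
  then have "edges_at H C (\<sigma> v) = edges_at G C v" by blast
  moreover have "\<sigma> v \<in> everts H C" using v ends unfolding everts_def by blast
  ultimately show "card (edges_at G C v) = 2" using assms(1) unfolding is_cycle_iff by metis
next
  have "separated H S T" if "separated G S T" "S \<subseteq> C" "T \<subseteq> C" for S T
    unfolding separated_def
  proof (intro ballI)
    fix e e' assume e: "e \<in> S" "e' \<in> T"
    then have "gends G e \<subseteq> everts G C" "gends G e' \<subseteq> everts G C"
      using that(2,3) unfolding everts_def by blast+
    then have "gends H e \<inter> gends H e' = \<sigma> ` (gends G e \<inter> gends G e')"
      using e that(2,3) ends by (simp add: inj_on_image_Int[OF assms(3)] subset_iff)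
    then show "gends H e \<inter> gends H e' = {}" using e that(1) unfolding separated_def by simp
  qed
  moreover have "edge_connected H C" using assms(1) unfolding is_cycle_iff by blast
  ultimately show "edge_connected G C" unfolding edge_connected_def by (meson Diff_subset)
qed

definition is_path :: "('v,'e) mgraph \<Rightarrow> 'e set \<Rightarrow> 'v \<Rightarrow> 'v \<Rightarrow> bool" where
  "is_path G P x y \<longleftrightarrow> P \<subseteq> gE G \<and> finite P \<and> (\<forall>e\<in>P. card (gends G e) = 2) \<and>
     card (edges_at G P x) = 1 \<and> card (edges_at G P y) = 1 \<and>
     (\<forall>v\<in>everts G P - {x, y}. card (edges_at G P v) = 2) \<and> edge_connected G P"

lemma is_path_end_edge:
  assumes "is_path G P x y"
  obtains a where "edges_at G P x = {a}"
  using assms unfolding is_path_def by (meson card_1_singletonE)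

lemma is_path_ends_in_everts: "is_path G P x y \<Longrightarrow> x \<in> everts G P \<and> y \<in> everts G P"
  unfolding is_path_def by (metis card.empty edges_at_eq_empty_iff zero_neq_one)

lemma is_cycle_Un_paths:
  assumes P: "is_path G P x y" and P': "is_path G P' x y"
    and disj: "P \<inter> P' = {}" and common: "everts G P \<inter> everts G P' \<subseteq> {x, y}"
  shows "is_cycle G (P \<union> P')"
proof -
  obtain a where a: "edges_at G P x = {a}" using P by (rule is_path_end_edge)
  obtain b where b: "edges_at G P' x = {b}" using P' by (rule is_path_end_edge)
  show ?thesis
    unfolding is_cycle_iff
  proof (intro conjI ballI)
    show "P \<union> P' \<subseteq> gE G" "finite (P \<union> P')" "P \<union> P' \<noteq> {}"
      using P P' a unfolding is_path_def by auto
  next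
    show "card (gends G e) = 2" if "e \<in> P \<union> P'" for e
      using that P P' unfolding is_path_def by auto
  next
    fix v assume v: "v \<in> everts G (P \<union> P')"
    have deg: "card (edges_at G R v) = (if v \<in> {x, y} then 1 else if v \<in> everts G R then 2 else 0)"
      if "is_path G R x y" for R
      using that unfolding is_path_def by (auto simp: edges_at_eq_empty_iff[symmetric])
    have "edges_at G (P \<union> P') v = edges_at G P v \<union> edges_at G P' v" by auto
    then have "card (edges_at G (P \<union> P') v) = card (edges_at G P v) + card (edges_at G P' v)"
      using P P' disj unfolding is_path_def by (simp add: card_Un_disjoint disjoint_iff)
    then show "card (edges_at G (P \<union> P') v) = 2"
      using deg[OF P] deg[OF P'] v common by (auto simp: everts_def)
  next
    have "a \<in> P \<union> P'" using a by blast
    then show "edge_connected G (P \<union> P')"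
    proof (rule edge_connectedI)
      fix S assume S: "S \<subseteq> P \<union> P'" "a \<in> S" "separated G S (P \<union> P' - S)"
      have restrict: "S \<inter> R = R" if "is_path G R x y" "R \<subseteq> P \<union> P'" "S \<inter> R \<noteq> {}" for R
        using that S(3) unfolding is_path_def
        by (intro edge_connectedD) (auto simp: separated_def)
      have "S \<inter> P = P" using restrict[OF P] a S(2) by blast
      moreover have "b \<in> S"
        using S(3) a b S(2) unfolding separated_def by blast
      then have "S \<inter> P' = P'" using restrict[OF P'] b by blast
      ultimately show "S = P \<union> P'" using S(1) by blast
    qed
  qed
qed

lemma incident_meets_neighbors:
  assumes "wf_mgraph G" "e \<in> incident G v"
  shows "gends G e \<inter> neighbors G v \<noteq> {}"
proof -
  have "card (gends G e) = 2" "v \<in> gends G e"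
    using assms unfolding wf_mgraph_def incident_def by auto
  then obtain u where "u \<in> gends G e" "u \<noteq> v" by (metis card_2_iff insert_iff)
  then show ?thesis using assms(2) unfolding neighbors_def by blast
qed

context
  fixes G :: "('v,'e) mgraph" and x0 x1 x2 :: 'v and Q :: "'e set"
  assumes wf: "wf_mgraph G" and x1_neq_x2: "x1 \<noteq> x2"
    and cycle: "is_cycle (bicontract G x0 x1 x2) Q" and not_cycle: "\<not> is_cycle G Q"
begin

lemma bicontract_cycle_edge:
  assumes "e \<in> Q"
  shows "e \<in> gE G" "x0 \<notin> gends G e" "card (gends G e) = 2"
    and "card (merge_map x1 x2 ` gends G e) = 2"
  using cycle wf assms unfolding is_cycle_def wf_mgraph_def by auto

lemma bicontract_cycle_edge_not_both:
  assumes "e \<in> Q" "x1 \<in> gends G e"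
  shows "x2 \<notin> gends G e"
proof
  assume "x2 \<in> gends G e"
  with assms(2) have "{x1, x2} \<subseteq> gends G e" by blast
  moreover have "finite (gends G e)"
    using bicontract_cycle_edge(3)[OF assms(1)] by (metis card.infinite zero_neq_numeral)
  ultimately have "gends G e = {x1, x2}"
    using bicontract_cycle_edge(3)[OF assms(1)] x1_neq_x2 by (metis card_2_iff card_subset_eq)
  then have "merge_map x1 x2 ` gends G e = {x1}" by (auto simp: merge_map_def)
  then show False using bicontract_cycle_edge(4)[OF assms(1)] by simp
qed

lemma bicontract_cycle_through_merged: "x1 \<in> everts G Q" "x2 \<in> everts G Q"
proof -
  have "is_cycle G Q" if "x1 \<notin> everts G Q \<or> x2 \<notin> everts G Q"
    by (rule is_cycle_transfer[OF cycle _ inj_on_merge_map[OF that]])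
      (auto intro: bicontract_cycle_edge(1))
  then show "x1 \<in> everts G Q" "x2 \<in> everts G Q" using not_cycle by blast+
qed

lemma bicontract_cycle_degree_merged: "card (edges_at G Q x1) = 1" "card (edges_at G Q x2) = 1"
proof -
  have fin: "finite (edges_at G Q v)" for v using cycle unfolding is_cycle_iff by simp
  have "x1 \<in> everts (bicontract G x0 x1 x2) Q"
    using bicontract_cycle_through_merged by (force simp: everts_bicontract merge_map_def)
  then have "card (edges_at (bicontract G x0 x1 x2) Q x1) = 2"
    using cycle unfolding is_cycle_iff by blast
  then have "card (edges_at G Q x1 \<union> edges_at G Q x2) = 2"
    by (simp only: edges_at_bicontract_merged)
  moreover have "edges_at G Q x1 \<inter> edges_at G Q x2 = {}" using bicontract_cycle_edge_not_both by blast
  moreover have "card (edges_at G Q x1) > 0" "card (edges_at G Q x2) > 0"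
    using bicontract_cycle_through_merged fin unfolding card_gt_0_iff by (auto simp: everts_def)
  ultimately show "card (edges_at G Q x1) = 1" "card (edges_at G Q x2) = 1"
    using fin by (simp_all add: card_Un_disjoint)
qed

lemma bicontract_cycle_degree_unmerged:
  assumes "v \<in> everts G Q - {x1, x2}"
  shows "card (edges_at G Q v) = 2"
proof -
  have "v \<in> everts (bicontract G x0 x1 x2) Q"
    using assms by (force simp: everts_bicontract merge_map_def)
  then have "card (edges_at (bicontract G x0 x1 x2) Q v) = 2"
    using cycle unfolding is_cycle_iff by blast
  then show ?thesis using assms by (metis DiffD2 edges_at_bicontract_unmerged)
qed

text \<open>A part S of Q that is separated in G from the rest of Q and contains the edge at x1 must
  reach x2, for otherwise x1 would be the only vertex of odd degree in S. Then S contains both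
  edges glued in the bicontraction, so S is separated from the rest of Q in G/x0 as well.\<close>
lemma bicontract_cycle_edge_connected: "edge_connected G Q"
proof -
  obtain a1 where a1: "edges_at G Q x1 = {a1}"
    using bicontract_cycle_degree_merged(1) by (meson card_1_singletonE)
  obtain a2 where a2: "edges_at G Q x2 = {a2}"
    using bicontract_cycle_degree_merged(2) by (meson card_1_singletonE)
  have "a1 \<in> Q" using a1 by blast
  then show ?thesis
  proof (rule edge_connectedI)
    fix S assume S: "S \<subseteq> Q" "a1 \<in> S" "separated G S (Q - S)"
    have degree_S: "edges_at G S v = edges_at G Q v" if "v \<in> everts G S" for v
      using S(1,3) that by (rule edges_at_separated)
    have fin: "finite S" using S(1) cycle finite_subset unfolding is_cycle_iff by blast
    have x1_S: "x1 \<in> everts G S" using a1 S(2) by (auto simp: everts_def)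
    have "x2 \<in> everts G S"
    proof (rule ccontr)
      assume x2_S: "x2 \<notin> everts G S"
      have "\<forall>v\<in>everts G S - {x1}. even (card (edges_at G S v))"
      proof
        fix v assume v: "v \<in> everts G S - {x1}"
        then have "v \<in> everts G Q - {x1, x2}" using x2_S S(1) unfolding everts_def by blast
        then show "even (card (edges_at G S v))"
          using degree_S v bicontract_cycle_degree_unmerged by simp
      qed
      then have "even (card (edges_at G S x1))"
        using fin S(1) bicontract_cycle_edge(3) by (intro even_degree_if_others_even) auto
      then show False using degree_S[OF x1_S] bicontract_cycle_degree_merged(1) by simp
    qed
    then have "a2 \<in> S" using degree_S a2 by blast
    then have "separated (bicontract G x0 x1 x2) S (Q - S)"
      using S a1 a2 by (intro separated_bicontract) auto
    moreover have "edge_connected (bicontract G x0 x1 x2) Q"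
      using cycle unfolding is_cycle_iff by blast
    ultimately show "S = Q" using S(1,2) edge_connectedD by blast
  qed
qed

lemma bicontract_cycle_is_path: "is_path (delete_vertex G x0) Q x1 x2"
  using cycle bicontract_cycle_edge bicontract_cycle_degree_merged bicontract_cycle_degree_unmerged
    bicontract_cycle_edge_connected
  unfolding is_path_def is_cycle_iff by auto

end

lemma bicontract_cycles_meeting_at_merged:
  assumes "is_cycle (bicontract G x0 x1 x2) Q"
    and "everts (bicontract G x0 x1 x2) Q \<inter> everts (bicontract G x0 x1 x2) Q' = {x1}"
  shows "Q \<inter> Q' = {}" "everts G Q \<inter> everts G Q' \<subseteq> {x1, x2}"
proof -
  show "Q \<inter> Q' = {}"
  proof (rule ccontr)
    assume "Q \<inter> Q' \<noteq> {}"
    then obtain e where e: "e \<in> Q" "e \<in> Q'" by blast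
    then have "gends (bicontract G x0 x1 x2) e \<subseteq> {x1}"
      using assms(2) unfolding everts_def by blast
    then have "card (gends (bicontract G x0 x1 x2) e) \<le> 1" using card_mono[of "{x1}"] by simp
    then show False using assms(1) e(1) unfolding is_cycle_def by auto
  qed
  show "everts G Q \<inter> everts G Q' \<subseteq> {x1, x2}"
    using assms(2) unfolding everts_bicontract by (auto simp: merge_map_def)
qed

theorem lemma5p1:
  fixes G :: "('v,'e) mgraph" and x0 x1 x2 :: 'v and Q Q' :: "'e set"
  assumes "wf_mgraph G"
    and "x0 \<in> gV G"
    and "degree G x0 = 2"
    and "neighbors G x0 = {x1, x2}"
    and "x1 \<noteq> x2"
    and "osculating_bicycle (bicontract G x0 x1 x2) Q Q'"
    and "\<not> is_cycle G Q"
    and "\<not> is_cycle G Q'"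
  shows "isolating_cycle G x0 (Q \<union> Q') \<and> even (card (Q \<union> Q'))"
proof -
  let ?J = "bicontract G x0 x1 x2"
  have cycles: "is_cycle ?J Q" "is_cycle ?J Q'"
    and common: "card (everts ?J Q \<inter> everts ?J Q') = 1"
    and parity: "even (card Q) \<longleftrightarrow> even (card Q')"
    using assms(6) unfolding osculating_bicycle_def by auto
  have paths: "is_path (delete_vertex G x0) Q x1 x2" "is_path (delete_vertex G x0) Q' x1 x2"
    using assms(1,5,7,8) cycles by (auto intro: bicontract_cycle_is_path)
  then have ends: "{x1, x2} \<subseteq> everts G Q" "{x1, x2} \<subseteq> everts G Q'"
    using is_path_ends_in_everts by fastforce+
  then have "x1 \<in> everts ?J Q \<inter> everts ?J Q'"
    by (force simp: everts_bicontract merge_map_def)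
  with common have "everts ?J Q \<inter> everts ?J Q' = {x1}"
    by (metis card_1_singletonE singletonD)
  with cycles(1) have disjoint: "Q \<inter> Q' = {}"
    and "everts G Q \<inter> everts G Q' \<subseteq> {x1, x2}"
    by (rule bicontract_cycles_meeting_at_merged)+
  with paths have "is_cycle (delete_vertex G x0) (Q \<union> Q')"
    by (intro is_cycle_Un_paths) auto
  \<comment> \<open>Only the neighbours of x0 matter here.\<close>
  moreover have "\<forall>e\<in>incident G x0. gends G e \<inter> everts G (Q \<union> Q') \<noteq> {}"
    using incident_meets_neighbors[OF assms(1)] assms(4) ends by (fastforce simp: everts_def)
  moreover have "even (card (Q \<union> Q'))"
    using paths parity disjoint unfolding is_path_def by (simp add: card_Un_disjoint)
  ultimately show ?thesis using assms(2) unfolding isolating_cycle_def by blast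
qed

end
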